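(* Let $c_1\ge c_2>0$, let $c(x)=c_1$ for $x<0$ and $c(x)=c_2$ for $x\ge0$, let $\rho\in(0,1)$, and let $\rho(x,t)$ be the macroscopic density of the inhomogeneous TASEP with speed function $c$ and constant initial profile $\rho_0\equiv\rho$ (as described in the context). Let $\rho^*=\frac12-\frac12\sqrt{1-c_2/c_1}$. Then, for $t>0$: (i) If $0<\rho<\rho^*$, with $r^*=\frac12-\frac12\sqrt{1-4\rho(1-\rho)c_1/c_2}$: $\rho(x,t)=\rho$ for $x\le0$; $=r^*$ for $0\le x\le c_2(1-2r^* )t$; $=\frac12(1-\frac{x}{tc_2})$ for $c_2(1-2r^* )t\le x\le c_2(1-2\rho)t$; $=\rho$ for $x\ge(1-2\rho)tc_2$. (ii) If $\rho^*\le\rho\le\frac12$: $\rho(x,t)=\rho$ for $x\le-tc_1(\rho-\rho^* )$; $=1-\rho^*$ for $-tc_1(\rho-\rho^* )\le x\le0$; $=\frac12(1-\frac{x}{tc_2})$ for $0\le x\le(1-2\rho)tc_2$; $=\rho$ for $x\ge(1-2\rho)tc_2$. (iii) If $\rho\ge\frac12$, with $r^*=\frac12-\frac12\sqrt{1-4\rho(1-\rho)c_2/c_1}$: $\rho(x,t)=\rho$ for $x\le-tc_1(\rho-r^* )$; $=1-r^*$ for $-tc_1(\rho-r^* )\le x\le0$; $=\rho$ for $x>0$.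
   Context: Macroscopic density: $\rho(x,t)=v_x(x,t)$ where $v(x,t)=\sup_w\{v_0(w(0))-\int_0^tc(w(s))g(w'(s)/c(w(s)))ds\}$ over continuous piecewise $C^1$ paths $w:[0,t]\to\mathbb{R}$ with $w(t)=x$, $v_0(x)=\rho x$, and $g(y)=-y$ for $y\le-1$, $\frac14(1-y)^2$ for $|y|\le1$, $0$ for $y\ge1$. By the hydrodynamic limit, this is the a.s. limit of the empirical density of the TASEP in which a particle at $i$ jumps to $i+1$ at rate $c(i/n)$ if vacant, run for time $nt$, when the initial configurations satisfy $n^{-1}\sum_{i=\lfloor na\rfloor+1}^{\lfloor nb\rfloor}\eta^n_i(0)\to\rho(b-a)$ a.s. for all $a<b$. *)

theory Defs
  imports "HOL-Analysis.Analysis"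
begin

definition tasep_g :: "real \<Rightarrow> real" where
  "tasep_g y = (if y \<le> -1 then - y else if y \<le> 1 then (1 - y)^2 / 4 else 0)"

definition step_speed :: "real \<Rightarrow> real \<Rightarrow> real \<Rightarrow> real" where
  "step_speed c1 c2 x = (if x < 0 then c1 else c2)"

definition path_cost :: "(real \<Rightarrow> real) \<Rightarrow> real \<Rightarrow> (real \<Rightarrow> real) \<Rightarrow> real" where
  "path_cost c t w =
     integral {0..t} (\<lambda>s. c (w s) * tasep_g (vector_derivative w (at s) / c (w s)))"

text \<open>Admissible paths: continuous piecewise C1 on [0,t], ending at x, with
  integrable running cost (the integrand is nonnegative, so non-integrable paths
  have infinite cost and do not contribute to the supremum).\<close>
definition admissible_path :: "(real \<Rightarrow> real) \<Rightarrow> real \<Rightarrow> real \<Rightarrow> (real \<Rightarrow> real) \<Rightarrow> bool" where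
  "admissible_path c t x w \<longleftrightarrow>
     w piecewise_C1_differentiable_on {0..t} \<and> w t = x \<and>
     (\<lambda>s. c (w s) * tasep_g (vector_derivative w (at s) / c (w s))) integrable_on {0..t}"

definition value_fn :: "(real \<Rightarrow> real) \<Rightarrow> (real \<Rightarrow> real) \<Rightarrow> real \<Rightarrow> real \<Rightarrow> real" where
  "value_fn c v0 x t = Sup {v0 (w 0) - path_cost c t w | w. admissible_path c t x w}"

end

theory Submission
  imports Defs
begin

text \<open>
  The value function is a supremum of payoffs \<open>rho * w 0 - cost w\<close> over paths, so on each region
  of the profile it is computed by matching bounds. Lower bounds come from explicit paths along
  characteristics: lines of velocity \<open>c (1 - 2 p)\<close> carrying density \<open>p\<close>, possibly broken once at
  the origin. Upper bounds come from calibration: \<open>tasep_g\<close> is the convex conjugate of the flux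
  \<open>p (1 - p)\<close>, so for a \<open>C\<^sup>1\<close> function \<open>Phi \<ge> rho * y\<close> with \<open>0 \<le> Phi' \<le> 1\<close> and
  \<open>c(y) Phi'(y) (1 - Phi'(y)) \<ge> a\<close>, every path ending at \<open>x\<close> has payoff at most \<open>Phi x - a t\<close>.
  Smoothed corners at the origin with slopes \<open>p1 \<le> rho \<le> p2\<close> serve as \<open>Phi\<close>; paths ending
  behind the shock are split at their last visit to the origin. On each open region the value is
  thus affine in \<open>x\<close>, or quadratic in the rarefaction fan, and differentiating gives the density.
\<close>

section \<open>The Lagrangian and the flux\<close>

lemma tasep_g_ge_affine:
  fixes p u :: real
  assumes "0 \<le> p" "p \<le> 1"
  shows "p * (1 - p) - p * u \<le> tasep_g u"
proof (cases "u \<le> -1")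
  case True
  have "(1 - p) * p \<le> (1 - p) * - u" using True assms by (intro mult_left_mono) auto
  then show ?thesis using True by (simp add: tasep_g_def algebra_simps)
next
  case False
  show ?thesis
  proof (cases "u \<le> 1")
    case True
    have "tasep_g u - (p * (1 - p) - p * u) = ((1 - u) / 2 - p)\<^sup>2"
      using True False by (simp add: tasep_g_def power2_eq_square field_simps)
    then show ?thesis using zero_le_power2[of "(1 - u) / 2 - p"] by linarith
  next
    case False
    have "0 \<le> p * (u - 1 + p)" using False assms by simp
    then show ?thesis using False \<open>\<not> u \<le> -1\<close> by (simp add: tasep_g_def algebra_simps)
  qed
qed

lemma scaled_tasep_g_ge_affine:
  fixes k p q a :: real
  assumes "0 < k" "0 \<le> p" "p \<le> 1" "a \<le> k * p * (1 - p)"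
  shows "a - p * q \<le> k * tasep_g (q / k)"
proof -
  have "k * (p * (1 - p) - p * (q / k)) \<le> k * tasep_g (q / k)"
    using tasep_g_ge_affine[OF assms(2,3), of "q / k"] assms(1) by (intro mult_left_mono) auto
  then show ?thesis using assms by (simp add: algebra_simps)
qed

lemma tasep_g_characteristic:
  fixes p :: real
  assumes "0 \<le> p" "p \<le> 1"
  shows "tasep_g (1 - 2 * p) = p\<^sup>2"
  using assms by (cases "p = 1") (auto simp: tasep_g_def power2_eq_square field_simps)

lemma flux_mono:
  fixes u v :: real
  assumes "u \<le> v" "u + v \<le> 1"
  shows "u * (1 - u) \<le> v * (1 - v)"
proof -
  have "0 \<le> (v - u) * (1 - u - v)" using assms by simp
  then show ?thesis by (simp add: algebra_simps)
qed

lemma flux_le_imp_le: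
  fixes u v :: real
  assumes "u \<le> 1/2" "v \<le> 1/2" "u * (1 - u) \<le> v * (1 - v)"
  shows "u \<le> v"
proof (rule ccontr)
  assume "\<not> u \<le> v"
  then have "0 < (u - v) * (1 - u - v)" using assms by (intro mult_pos_pos) auto
  then show False using assms(3) by (simp add: algebra_simps)
qed

lemma flux_ge_min_endpoints:
  fixes p1 p2 q :: real
  assumes "p1 \<le> q" "q \<le> p2"
  shows "min (p1 * (1 - p1)) (p2 * (1 - p2)) \<le> q * (1 - q)"
proof (cases "q + p1 \<le> 1")
  case True
  then show ?thesis using flux_mono[of p1 q] assms by simp
next
  case False
  then show ?thesis using flux_mono[of "1 - p2" "1 - q"] assms by (simp add: algebra_simps)
qed

lemma flux_le_quarter: "(p::real) * (1 - p) \<le> 1/4"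
  using flux_mono[of p "1/2"] flux_mono[of "1 - p" "1/2"] by (cases "p \<le> 1/2") (auto simp: algebra_simps)

lemma flux_lower_root:
  fixes D :: real
  assumes "0 \<le> D" "D \<le> 1"
  defines "r \<equiv> 1/2 - 1/2 * sqrt D"
  shows "0 \<le> r" "r \<le> 1/2" "r * (1 - r) = (1 - D) / 4" "0 < D \<Longrightarrow> r < 1/2"
proof -
  have "sqrt D \<le> 1" "sqrt D * sqrt D = D" using assms by auto
  then show "0 \<le> r" "r \<le> 1/2" "r * (1 - r) = (1 - D) / 4" "0 < D \<Longrightarrow> r < 1/2"
    unfolding r_def by (auto simp: algebra_simps)
qed

section \<open>Calibration\<close>

definition running_cost :: "(real \<Rightarrow> real) \<Rightarrow> (real \<Rightarrow> real) \<Rightarrow> real \<Rightarrow> real" where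
  "running_cost c w s = c (w s) * tasep_g (vector_derivative w (at s) / c (w s))"

lemma path_cost_eq_integral: "path_cost c t w = integral {0..t} (running_cost c w)"
  unfolding path_cost_def running_cost_def[abs_def] ..

lemma admissible_pathD:
  assumes "admissible_path c t x w"
  shows "w piecewise_C1_differentiable_on {0..t}" "w t = x" "running_cost c w integrable_on {0..t}"
  using assms unfolding admissible_path_def running_cost_def[abs_def] by auto

lemma value_fn_eqI:
  assumes "\<And>w. admissible_path c t x w \<Longrightarrow> v0 (w 0) - path_cost c t w \<le> F"
    and "admissible_path c t x w" "v0 (w 0) - path_cost c t w = F"
  shows "value_fn c v0 x t = F"
  unfolding value_fn_def by (rule cSup_eq_maximum) (use assms in auto)

lemma cost_ge_calibration:
  fixes c w Phi Phi' :: "real \<Rightarrow> real" and a \<alpha> \<beta> :: real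
  assumes Phi: "\<And>y. (Phi has_real_derivative Phi' y) (at y)"
    and w: "w piecewise_C1_differentiable_on {\<alpha>..\<beta>}" "\<alpha> \<le> \<beta>"
    and int: "running_cost c w integrable_on {\<alpha>..\<beta>}"
    and flux: "\<And>s. s \<in> {\<alpha><..\<beta>} \<Longrightarrow> 0 < c (w s) \<and> 0 \<le> Phi' (w s) \<and> Phi' (w s) \<le> 1
                      \<and> a \<le> c (w s) * Phi' (w s) * (1 - Phi' (w s))"
  shows "Phi (w \<alpha>) - Phi (w \<beta>) + a * (\<beta> - \<alpha>) \<le> integral {\<alpha>..\<beta>} (running_cost c w)"
proof -
  from w(1) obtain S D where cont: "continuous_on {\<alpha>..\<beta>} w" and "finite S"
    and der: "\<And>x. x \<in> {\<alpha>..\<beta>} - S \<Longrightarrow> (w has_vector_derivative D x) (at x)"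
    unfolding piecewise_C1_differentiable_on_def C1_differentiable_on_def by blast
  let ?F = "\<lambda>s. Phi' (w s) * vector_derivative w (at s)"
  have ftc: "(?F has_integral (Phi (w \<beta>) - Phi (w \<alpha>))) {\<alpha>..\<beta>}"
  proof (rule fundamental_theorem_of_calculus_interior_strong[OF \<open>finite S\<close> w(2)])
    fix x assume "x \<in> {\<alpha><..<\<beta>} - S"
    then have d: "(w has_real_derivative D x) (at x)"
      using der by (auto simp: has_real_derivative_iff_has_vector_derivative)
    then have "vector_derivative w (at x) = D x"
      by (simp add: has_real_derivative_iff_has_vector_derivative vector_derivative_at)
    with DERIV_chain2[OF Phi d] show "((\<lambda>s. Phi (w s)) has_vector_derivative ?F x) (at x)"
      by (simp add: has_real_derivative_iff_has_vector_derivative)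
  next
    have "continuous_on UNIV Phi"
      using Phi by (meson DERIV_isCont continuous_at_imp_continuous_on)
    then show "continuous_on {\<alpha>..\<beta>} (\<lambda>s. Phi (w s))"
      using cont by (rule continuous_on_compose2) auto
  qed
  have "((\<lambda>s. a - ?F s) has_integral (a * (\<beta> - \<alpha>) - (Phi (w \<beta>) - Phi (w \<alpha>)))) {\<alpha>..\<beta>}"
    using has_integral_diff[OF has_integral_const_real[of a \<alpha> \<beta>] ftc] w(2) by (simp add: mult.commute)
  then have "((\<lambda>s. if s = \<alpha> then running_cost c w s else a - ?F s) has_integral
              (a * (\<beta> - \<alpha>) - (Phi (w \<beta>) - Phi (w \<alpha>)))) {\<alpha>..\<beta>}"
    by (rule has_integral_spike_finite[of "{\<alpha>}", rotated 2]) auto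
  then have "a * (\<beta> - \<alpha>) - (Phi (w \<beta>) - Phi (w \<alpha>)) \<le> integral {\<alpha>..\<beta>} (running_cost c w)"
    by (rule has_integral_le[OF _ integrable_integral[OF int]])
      (use flux scaled_tasep_g_ge_affine in \<open>auto simp: running_cost_def\<close>)
  then show ?thesis by simp
qed

lemma DERIV_if_glue:
  fixes f g f' g' :: "real \<Rightarrow> real"
  assumes "\<And>y. (f has_real_derivative f' y) (at y)" "\<And>y. (g has_real_derivative g' y) (at y)"
    and "f a = g a" "f' a = g' a"
  shows "((\<lambda>y. if y < a then f y else g y) has_real_derivative (if x < a then f' x else g' x)) (at x)"
proof -
  have "((\<lambda>y. if y \<in> {..<a} then f y else g y) has_vector_derivative
        (if x \<in> {..<a} then f' x else g' x)) (at x within UNIV)"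
    by (rule has_vector_derivative_If_within_closures[where T="{a..}"])
      (use assms in \<open>auto simp: has_real_derivative_iff_has_vector_derivative[symmetric]
          has_field_derivative_at_within\<close>)
  then show ?thesis by (simp add: has_real_derivative_iff_has_vector_derivative)
qed

text \<open>A \<open>C\<^sup>1\<close> smoothing, over the layer \<open>[-e, 0]\<close>, of the corner with slopes \<open>p1\<close> on the left and
  \<open>p2\<close> on the right; it lies above the corner \<open>p1 y, p2 y\<close> by at most \<open>(p2 - p1) e / 2\<close>.\<close>
definition kink :: "real \<Rightarrow> real \<Rightarrow> real \<Rightarrow> real \<Rightarrow> real" where
  "kink p1 p2 e y =
    (if y < -e then p1 * y
     else if y < 0 then p2 * y + (p2 - p1) * y\<^sup>2 / (2 * e) + (p2 - p1) * e / 2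
     else p2 * y + (p2 - p1) * e / 2)"

definition kink' :: "real \<Rightarrow> real \<Rightarrow> real \<Rightarrow> real \<Rightarrow> real" where
  "kink' p1 p2 e y = (if y < -e then p1 else if y < 0 then p2 + (p2 - p1) * y / e else p2)"

lemma kink_has_real_derivative:
  assumes "0 < e"
  shows "(kink p1 p2 e has_real_derivative kink' p1 p2 e y) (at y)"
proof -
  have right: "((\<lambda>y. if y < 0 then p2 * y + (p2 - p1) * y\<^sup>2 / (2 * e) + (p2 - p1) * e / 2
                     else p2 * y + (p2 - p1) * e / 2)
      has_real_derivative (if z < 0 then p2 + (p2 - p1) * z / e else p2)) (at z)" for z
    by (rule DERIV_if_glue) (use assms in \<open>auto intro!: derivative_eq_intros simp: field_simps\<close>)
  have "((\<lambda>y. if y < -e then p1 * y else (if y < 0 then p2 * y + (p2 - p1) * y\<^sup>2 / (2 * e) + (p2 - p1) * e / 2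
                                         else p2 * y + (p2 - p1) * e / 2))
      has_real_derivative (if y < -e then p1 else (if y < 0 then p2 + (p2 - p1) * y / e else p2))) (at y)"
    by (rule DERIV_if_glue[OF _ right])
      (use assms in \<open>auto intro!: derivative_eq_intros simp: power2_eq_square field_simps\<close>)
  then show ?thesis unfolding kink_def[abs_def] kink'_def .
qed

lemma kink_ge_linear:
  assumes "0 < e" "p1 \<le> rho" "rho \<le> p2"
  shows "rho * y \<le> kink p1 p2 e y"
proof -
  consider "y < -e" | "-e \<le> y" "y < 0" | "0 \<le> y" by linarith
  then show ?thesis
  proof cases
    case 1
    then show ?thesis using assms by (simp add: kink_def mult_right_mono_neg)
  next
    case 2
    have "kink p1 p2 e y - p1 * y = (p2 - p1) * (y + e)\<^sup>2 / (2 * e)"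
      using 2 assms by (simp add: kink_def power2_eq_square field_simps)
    moreover have "0 \<le> (p2 - p1) * (y + e)\<^sup>2 / (2 * e)" "rho * y \<le> p1 * y"
      using 2 assms by (simp_all add: mult_right_mono_neg)
    ultimately show ?thesis by linarith
  next
    case 3
    have "rho * y \<le> p2 * y" "0 \<le> (p2 - p1) * e / 2" using 3 assms by (auto intro: mult_right_mono)
    then show ?thesis using 3 assms(1) by (simp add: kink_def)
  qed
qed

lemma kink'_between:
  assumes "0 < e" "p1 \<le> p2"
  shows "p1 \<le> kink' p1 p2 e y" "kink' p1 p2 e y \<le> p2"
proof -
  have "(p2 - p1) * (-e) \<le> (p2 - p1) * y" "(p2 - p1) * y \<le> 0" if "-e \<le> y" "y < 0"
    using that assms mult_left_mono[of "-e" y "p2 - p1"] by (auto intro: mult_nonneg_nonpos)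
  then show "p1 \<le> kink' p1 p2 e y" "kink' p1 p2 e y \<le> p2"
    using assms by (auto simp: kink'_def field_simps)
qed

lemma cost_ge_kink:
  fixes c1 c2 p1 p2 a e \<alpha> \<beta> :: real and w :: "real \<Rightarrow> real"
  assumes "0 < c2" "c2 \<le> c1" "0 < e" "0 \<le> p1" "p1 \<le> p2" "p2 \<le> 1"
    and "a \<le> c1 * p1 * (1 - p1)" "a \<le> c2 * p2 * (1 - p2)"
    and w: "w piecewise_C1_differentiable_on {\<alpha>..\<beta>}" "\<alpha> \<le> \<beta>"
    and int: "running_cost (step_speed c1 c2) w integrable_on {\<alpha>..\<beta>}"
  shows "kink p1 p2 e (w \<alpha>) - kink p1 p2 e (w \<beta>) + a * (\<beta> - \<alpha>)
           \<le> integral {\<alpha>..\<beta>} (running_cost (step_speed c1 c2) w)"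
proof (rule cost_ge_calibration[OF kink_has_real_derivative[OF \<open>0 < e\<close>] w int])
  fix s
  let ?q = "kink' p1 p2 e (w s)"
  have q: "p1 \<le> ?q" "?q \<le> p2" using kink'_between assms by auto
  have "a \<le> step_speed c1 c2 (w s) * (?q * (1 - ?q))"
  proof (cases "w s < 0")
    case True
    have "c2 * (p2 * (1 - p2)) \<le> c1 * (p2 * (1 - p2))"
      using assms by (intro mult_right_mono) auto
    then have "a \<le> c1 * min (p1 * (1 - p1)) (p2 * (1 - p2))"
      using assms by (auto simp: min_def mult.assoc)
    also have "\<dots> \<le> c1 * (?q * (1 - ?q))"
      using flux_ge_min_endpoints[OF q] assms by (intro mult_left_mono) auto
    finally show ?thesis using True by (simp add: step_speed_def)
  next
    case False
    then show ?thesis using assms by (simp add: step_speed_def kink'_def mult.assoc)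
  qed
  moreover have "0 < step_speed c1 c2 (w s)" using assms by (simp add: step_speed_def)
  ultimately show "0 < step_speed c1 c2 (w s) \<and> 0 \<le> ?q \<and> ?q \<le> 1
             \<and> a \<le> step_speed c1 c2 (w s) * ?q * (1 - ?q)"
    using q assms by (simp add: mult.assoc)
qed

lemma cost_ge_corner:
  fixes c1 c2 rho p1 p2 a \<alpha> \<beta> :: real and w :: "real \<Rightarrow> real"
  assumes "0 < c2" "c2 \<le> c1" "0 \<le> p1" "p1 \<le> rho" "rho \<le> p2" "p2 \<le> 1"
    and "a \<le> c1 * p1 * (1 - p1)" "a \<le> c2 * p2 * (1 - p2)"
    and w: "w piecewise_C1_differentiable_on {\<alpha>..\<beta>}" "\<alpha> \<le> \<beta>"
    and int: "running_cost (step_speed c1 c2) w integrable_on {\<alpha>..\<beta>}"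
  shows "rho * w \<alpha> - integral {\<alpha>..\<beta>} (running_cost (step_speed c1 c2) w)
           \<le> (if w \<beta> < 0 then p1 * w \<beta> else p2 * w \<beta>) - a * (\<beta> - \<alpha>)"
proof -
  have bound: "rho * w \<alpha> - integral {\<alpha>..\<beta>} (running_cost (step_speed c1 c2) w)
                 \<le> kink p1 p2 e (w \<beta>) - a * (\<beta> - \<alpha>)" if "0 < e" for e
    using cost_ge_kink[OF assms(1,2) that assms(3) _ assms(6-8) w int]
      kink_ge_linear[OF that assms(4,5), of "w \<alpha>"] assms(4,5) by linarith
  show ?thesis
  proof (cases "w \<beta> < 0")
    case True
    then show ?thesis using bound[of "- w \<beta> / 2"] by (simp add: kink_def)
  next
    case False
    show ?thesis
    proof (rule field_le_epsilon)
      fix e :: real assume "0 < e"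
      have "(p2 - p1) * e / 2 \<le> e" using \<open>0 < e\<close> assms mult_right_mono[of "p2 - p1" 2 e] by simp
      moreover have "kink p1 p2 e (w \<beta>) = p2 * w \<beta> + (p2 - p1) * e / 2"
        using False \<open>0 < e\<close> by (simp add: kink_def)
      ultimately show "rho * w \<alpha> - integral {\<alpha>..\<beta>} (running_cost (step_speed c1 c2) w)
                   \<le> (if w \<beta> < 0 then p1 * w \<beta> else p2 * w \<beta>) - a * (\<beta> - \<alpha>) + e"
        using bound[OF \<open>0 < e\<close>] False by simp
    qed
  qed
qed

lemma cost_ge_linear_left_phase:
  fixes c1 c2 q a \<alpha> \<beta> :: real and w :: "real \<Rightarrow> real"
  assumes "0 < c1" "0 \<le> q" "q \<le> 1" "a \<le> c1 * q * (1 - q)"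
    and w: "w piecewise_C1_differentiable_on {\<alpha>..\<beta>}" "\<alpha> \<le> \<beta>"
    and int: "running_cost (step_speed c1 c2) w integrable_on {\<alpha>..\<beta>}"
    and left: "\<And>s. s \<in> {\<alpha><..\<beta>} \<Longrightarrow> w s < 0"
  shows "q * w \<alpha> - q * w \<beta> + a * (\<beta> - \<alpha>) \<le> integral {\<alpha>..\<beta>} (running_cost (step_speed c1 c2) w)"
  by (rule cost_ge_calibration[where Phi' = "\<lambda>_. q", OF _ w int])
    (use assms in \<open>auto intro!: derivative_eq_intros simp: step_speed_def\<close>)

section \<open>Paths along characteristics\<close>

lemma obtain_last_zero:
  fixes w :: "real \<Rightarrow> real"
  assumes cont: "continuous_on {0..t} w" and "w t < 0" and "s1 \<in> {0..t}" "0 \<le> w s1"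
  obtains \<tau> where "0 \<le> \<tau>" "\<tau> \<le> t" "w \<tau> = 0" "\<And>s. \<tau> < s \<Longrightarrow> s \<le> t \<Longrightarrow> w s < 0"
proof -
  define S where "S = {s \<in> {0..t}. 0 \<le> w s}"
  have "closed S" unfolding S_def
    by (rule continuous_on_closed_Collect_le[OF continuous_on_const cont]) simp
  moreover have "bdd_above S" "S \<noteq> {}" using assms unfolding S_def by (auto intro: bdd_aboveI[of _ t])
  ultimately have "Sup S \<in> S" by (intro closed_contains_Sup)
  then have \<tau>: "0 \<le> Sup S" "Sup S \<le> t" "0 \<le> w (Sup S)" unfolding S_def by auto
  have after: "w s < 0" if "Sup S < s" "s \<le> t" for s
    using that \<tau> cSup_upper[OF _ \<open>bdd_above S\<close>, of s] unfolding S_def by force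
  obtain s where s: "Sup S \<le> s" "s \<le> t" "w s = 0"
    using IVT2'[of w t 0 "Sup S"] \<tau> \<open>w t < 0\<close> continuous_on_subset[OF cont, of "{Sup S..t}"] by auto
  then have "w (Sup S) = 0" using after[of s] by (cases "s = Sup S") auto
  with \<tau> after show ?thesis by (intro that) auto
qed

lemma step_speed_between:
  assumes "step_speed c1 c2 a = k" "step_speed c1 c2 b = k" "min a b \<le> y" "y \<le> max a b"
  shows "step_speed c1 c2 y = k"
  using assms by (auto simp: step_speed_def split: if_splits)

lemma affine_between_endpoints:
  fixes x A s t :: real
  assumes "0 \<le> s" "s \<le> t"
  shows "min (x - A * t) x \<le> x + A * (s - t)" "x + A * (s - t) \<le> max (x - A * t) x"
proof -
  have "A * (s - t) \<le> 0 \<and> A * - t \<le> A * (s - t) \<or> 0 \<le> A * (s - t) \<and> A * (s - t) \<le> A * - t"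
  proof (cases "0 \<le> A")
    case True
    then show ?thesis using assms mult_left_mono[of "- t" "s - t" A] by (simp add: mult_nonneg_nonpos)
  next
    case False
    then show ?thesis using assms mult_left_mono_neg[of "- t" "s - t" A] by (simp add: mult_nonpos_nonpos)
  qed
  then show "min (x - A * t) x \<le> x + A * (s - t)" "x + A * (s - t) \<le> max (x - A * t) x"
    by auto
qed

lemma step_speed_incoming:
  assumes "0 < k" "s < s0"
  shows "step_speed c1 c2 (k * (1 - 2 * p) * (s - s0)) = (if p < 1/2 then c1 else c2)"
proof (cases "p < 1/2")
  case True
  then have "k * (1 - 2 * p) * (s - s0) < 0" using assms by (intro mult_pos_neg) auto
  then show ?thesis using True by (simp add: step_speed_def)
next
  case False
  then have "0 \<le> k * (1 - 2 * p) * (s - s0)"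
    using assms by (intro mult_nonpos_nonpos) (auto simp: mult_nonneg_nonpos)
  then show ?thesis using False by (simp add: step_speed_def)
qed

lemma step_speed_outgoing:
  assumes "0 < k" "s0 < s" "p \<noteq> 1/2"
  shows "step_speed c1 c2 (k * (1 - 2 * p) * (s - s0)) = (if p < 1/2 then c2 else c1)"
proof (cases "p < 1/2")
  case True
  then have "0 < k * (1 - 2 * p) * (s - s0)" using assms by (intro mult_pos_pos) auto
  then show ?thesis using True by (simp add: step_speed_def)
next
  case False
  then have "k * (1 - 2 * p) < 0" using assms by (intro mult_pos_neg) auto
  then have "k * (1 - 2 * p) * (s - s0) < 0" using assms(2) by (simp add: mult_neg_pos)
  then show ?thesis using False by (simp add: step_speed_def)
qed

definition broken_line :: "real \<Rightarrow> real \<Rightarrow> real \<Rightarrow> real \<Rightarrow> real \<Rightarrow> real" where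
  "broken_line y0 A B s0 s = y0 + A * min (s - s0) 0 + B * max (s - s0) 0"

lemma broken_line_has_vector_derivative:
  assumes "s \<noteq> s0"
  shows "(broken_line y0 A B s0 has_vector_derivative (if s < s0 then A else B)) (at s)"
proof -
  have "((\<lambda>x. y0 + (if s < s0 then A else B) * (x - s0)) has_real_derivative (if s < s0 then A else B)) (at s)"
    by (auto intro!: derivative_eq_intros)
  then have "(broken_line y0 A B s0 has_real_derivative (if s < s0 then A else B)) (at s)"
    by (rule has_field_derivative_transform_within_open[where S = "if s < s0 then {..<s0} else {s0<..}"])
      (use assms in \<open>auto simp: broken_line_def split: if_splits\<close>)
  then show ?thesis by (simp add: has_real_derivative_iff_has_vector_derivative)
qed

lemma broken_line_piecewise_C1: "broken_line y0 A B s0 piecewise_C1_differentiable_on {0..t}"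
  unfolding piecewise_C1_differentiable_on_def
proof
  show "continuous_on {0..t} (broken_line y0 A B s0)"
    unfolding broken_line_def by (intro continuous_intros)
  have "continuous_on ({..<s0} \<union> {s0<..}) (\<lambda>x. if x < s0 then A else B)"
    by (rule continuous_on_cases_local_open) (auto intro: continuous_intros open_openin_trans)
  then have "broken_line y0 A B s0 C1_differentiable_on {0..t} - {s0}"
    unfolding C1_differentiable_on_def
    by (intro exI[of _ "\<lambda>x. if x < s0 then A else B"] conjI ballI broken_line_has_vector_derivative)
      (auto elim: continuous_on_subset)
  then show "\<exists>S. finite S \<and> broken_line y0 A B s0 C1_differentiable_on {0..t} - S"
    by blast
qed

lemma broken_line_cost:
  fixes c :: "real \<Rightarrow> real"
  assumes "0 \<le> s0" "s0 \<le> t"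
    and before: "\<And>s. 0 \<le> s \<Longrightarrow> s < s0 \<Longrightarrow> c (y0 + A * (s - s0)) = k1"
    and after: "\<And>s. s0 < s \<Longrightarrow> s \<le> t \<Longrightarrow> c (y0 + B * (s - s0)) = k2"
  shows "(running_cost c (broken_line y0 A B s0) has_integral
           s0 * (k1 * tasep_g (A / k1)) + (t - s0) * (k2 * tasep_g (B / k2))) {0..t}"
proof (rule has_integral_combine[OF assms(1,2)])
  show "(running_cost c (broken_line y0 A B s0) has_integral s0 * (k1 * tasep_g (A / k1))) {0..s0}"
  proof (rule has_integral_spike_finite[of "{s0}"])
    show "((\<lambda>_. k1 * tasep_g (A / k1)) has_integral s0 * (k1 * tasep_g (A / k1))) {0..s0}"
      using has_integral_const_real[of "k1 * tasep_g (A / k1)" 0 s0] assms(1) by simp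
  qed (use before in \<open>auto simp: running_cost_def broken_line_def
         vector_derivative_at[OF broken_line_has_vector_derivative]\<close>)
  show "(running_cost c (broken_line y0 A B s0) has_integral (t - s0) * (k2 * tasep_g (B / k2))) {s0..t}"
  proof (rule has_integral_spike_finite[of "{s0}"])
    show "((\<lambda>_. k2 * tasep_g (B / k2)) has_integral (t - s0) * (k2 * tasep_g (B / k2))) {s0..t}"
      using has_integral_const_real[of "k2 * tasep_g (B / k2)" s0 t] assms(2) by simp
  qed (use after in \<open>auto simp: running_cost_def broken_line_def
         vector_derivative_at[OF broken_line_has_vector_derivative]\<close>)
qed

lemma admissible_path_costI:
  assumes "w piecewise_C1_differentiable_on {0..t}" "w t = x" "(running_cost c w has_integral I) {0..t}"
  shows "admissible_path c t x w" "path_cost c t w = I"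
  using assms unfolding admissible_path_def path_cost_eq_integral
  by (auto simp: running_cost_def[abs_def] integral_unique has_integral_integrable)

lemma fan_profile_has_derivative:
  fixes t c2 x :: real
  assumes "0 < t" "0 < c2"
  shows "((\<lambda>y. - t * c2 * (1/2 * (1 - y / (t * c2)))\<^sup>2) has_real_derivative 1/2 * (1 - x / (t * c2))) (at x)"
  using assms by (auto intro!: derivative_eq_intros simp: field_simps power2_eq_square)

section \<open>The value function for a step speed\<close>

locale step_tasep =
  fixes c1 c2 rho t :: real
  assumes c2_pos: "0 < c2" and c2_le_c1: "c2 \<le> c1"
    and rho_pos: "0 < rho" and rho_less_1: "rho < 1" and t_pos: "0 < t"
begin

abbreviation payoff :: "(real \<Rightarrow> real) \<Rightarrow> real" where
  "payoff w \<equiv> rho * w 0 - path_cost (step_speed c1 c2) t w"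

abbreviation V :: "real \<Rightarrow> real" where
  "V x \<equiv> value_fn (step_speed c1 c2) (\<lambda>y. rho * y) x t"

lemma c1_pos: "0 < c1"
  using c2_pos c2_le_c1 by simp

lemma payoff_le_corner:
  assumes adm: "admissible_path (step_speed c1 c2) t x w"
    and "0 \<le> p1" "p1 \<le> rho" "rho \<le> p2" "p2 \<le> 1" "a \<le> c1 * p1 * (1 - p1)" "a \<le> c2 * p2 * (1 - p2)"
  shows "payoff w \<le> (if x < 0 then p1 * x else p2 * x) - a * t"
proof -
  note w = admissible_pathD[OF adm]
  show ?thesis
    using cost_ge_corner[OF c2_pos c2_le_c1 assms(2-7) w(1) _ w(3)] t_pos
    unfolding w(2) by (simp add: path_cost_eq_integral)
qed

text \<open>A path ending at \<open>x < 0\<close> either stays in the left phase, or its last visit to the right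
  phase is at the origin at some time \<open>\<tau>\<close>; the corner calibrant bounds the payoff up to \<open>\<tau>\<close> and the
  linear calibrant of slope \<open>1 - s\<close> the cost after \<open>\<tau>\<close>.\<close>
lemma payoff_le_shock:
  assumes adm: "admissible_path (step_speed c1 c2) t x w" and "x < 0"
    and s: "0 \<le> s" "s \<le> rho" "rho \<le> 1 - s"
    and p: "rho \<le> p" "p \<le> 1" "c1 * s * (1 - s) \<le> c2 * p * (1 - p)"
  shows "payoff w \<le> max (rho * x - c1 * rho * (1 - rho) * t) ((1 - s) * x - c1 * s * (1 - s) * t)"
proof -
  note w = admissible_pathD[OF adm]
  let ?c = "step_speed c1 c2" and ?a = "c1 * s * (1 - s)"
  show ?thesis
  proof (cases "\<exists>s1\<in>{0..t}. 0 \<le> w s1")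
    case False
    then have "w u < 0" if "u \<in> {0<..t}" for u using that by (auto simp: not_le)
    then have "rho * w 0 - rho * w t + c1 * rho * (1 - rho) * (t - 0) \<le> integral {0..t} (running_cost ?c w)"
      by (intro cost_ge_linear_left_phase[OF c1_pos _ _ _ w(1) _ w(3)])
        (use rho_pos rho_less_1 t_pos in auto)
    then show ?thesis using w(2) by (simp add: path_cost_eq_integral)
  next
    case True
    then obtain s1 where "s1 \<in> {0..t}" "0 \<le> w s1" by blast
    moreover have "continuous_on {0..t} w"
      using w(1) by (simp add: piecewise_C1_differentiable_on_def)
    ultimately obtain \<tau> where \<tau>: "0 \<le> \<tau>" "\<tau> \<le> t" "w \<tau> = 0" "\<And>s. \<tau> < s \<Longrightarrow> s \<le> t \<Longrightarrow> w s < 0"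
      using obtain_last_zero w(2) \<open>x < 0\<close> by metis
    have "?a \<le> c1 * rho * (1 - rho)"
      using flux_mono[of s rho] s c1_pos by (simp add: mult.assoc)
    then have "rho * w 0 - integral {0..\<tau>} (running_cost ?c w) \<le> - ?a * \<tau>"
      using cost_ge_corner[OF c2_pos c2_le_c1 _ order_refl p(1,2) _ p(3),
          OF _ _ piecewise_C1_differentiable_on_subset[OF w(1)] \<tau>(1)
          integrable_on_subinterval[OF w(3)]] \<tau> rho_pos by simp
    moreover have "(1 - s) * w \<tau> - (1 - s) * w t + ?a * (t - \<tau>)
                     \<le> integral {\<tau>..t} (running_cost ?c w)"
      by (rule cost_ge_linear_left_phase[OF c1_pos _ _ _
            piecewise_C1_differentiable_on_subset[OF w(1)] \<tau>(2) integrable_on_subinterval[OF w(3)]])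
        (use s \<tau> in \<open>auto simp: algebra_simps\<close>)
    moreover have "integral {0..\<tau>} (running_cost ?c w) + integral {\<tau>..t} (running_cost ?c w)
                     = integral {0..t} (running_cost ?c w)"
      using Henstock_Kurzweil_Integration.integral_combine[OF \<tau>(1,2) w(3)] .
    ultimately show ?thesis using \<tau>(3) w(2) by (simp add: path_cost_eq_integral algebra_simps)
  qed
qed

lemma payoff_straight_characteristic:
  assumes "0 \<le> p" "p \<le> 1"
    and "step_speed c1 c2 x = k" "step_speed c1 c2 (x - k * (1 - 2 * p) * t) = k"
  shows "\<exists>w. admissible_path (step_speed c1 c2) t x w
             \<and> payoff w = rho * (x - k * (1 - 2 * p) * t) - t * k * p\<^sup>2"
proof -
  let ?A = "k * (1 - 2 * p)"
  have "0 < k" using assms(3) c1_pos c2_pos by (auto simp: step_speed_def)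
  have "(running_cost (step_speed c1 c2) (broken_line x ?A ?A t) has_integral
          t * (k * tasep_g (?A / k)) + (t - t) * (k * tasep_g (?A / k))) {0..t}"
    by (rule broken_line_cost)
      (use t_pos step_speed_between[OF assms(4,3)] affine_between_endpoints in auto)
  moreover have "tasep_g (?A / k) = p\<^sup>2"
    using tasep_g_characteristic assms \<open>0 < k\<close> by simp
  ultimately have cost: "(running_cost (step_speed c1 c2) (broken_line x ?A ?A t) has_integral t * k * p\<^sup>2) {0..t}"
    by (simp add: mult.assoc)
  have "broken_line x ?A ?A t t = x" "broken_line x ?A ?A t 0 = x - ?A * t"
    using t_pos by (simp_all add: broken_line_def)
  with admissible_path_costI[OF broken_line_piecewise_C1 _ cost] show ?thesis
    by (intro exI[of _ "broken_line x ?A ?A t"]) simp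
qed

text \<open>The junction
  condition equates the payoff rate of the first leg with the flux of the second, which makes
  the payoff affine in the endpoint.\<close>
lemma payoff_two_characteristics:
  assumes "0 \<le> p1" "p1 \<le> 1" "0 \<le> p2" "p2 \<le> 1" "p2 \<noteq> 1/2"
    and k1: "k1 = (if p1 < 1/2 then c1 else c2)" and k2: "k2 = (if p2 < 1/2 then c2 else c1)"
    and junction: "k1 * (rho * (1 - 2 * p1) + p1\<^sup>2) = k2 * (p2 * (1 - p2))"
    and reach: "0 \<le> x / (k2 * (1 - 2 * p2))" "x / (k2 * (1 - 2 * p2)) \<le> t"
  shows "\<exists>w. admissible_path (step_speed c1 c2) t x w \<and> payoff w = p2 * x - k2 * p2 * (1 - p2) * t"
proof -
  define A B where "A = k1 * (1 - 2 * p1)" and "B = k2 * (1 - 2 * p2)"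
  define s0 where "s0 = t - x / B"
  have k_pos: "0 < k1" "0 < k2" using k1 k2 c1_pos c2_pos by auto
  have "B \<noteq> 0" using k_pos \<open>p2 \<noteq> 1/2\<close> by (simp add: B_def)
  have before: "step_speed c1 c2 (0 + A * (s - s0)) = k1" if "s < s0" for s
    using step_speed_incoming[OF k_pos(1) that] k1 by (simp add: A_def)
  have after: "step_speed c1 c2 (0 + B * (s - s0)) = k2" if "s0 < s" for s
    using step_speed_outgoing[OF k_pos(2) that \<open>p2 \<noteq> 1/2\<close>] k2 by (simp add: B_def)
  have cost: "(running_cost (step_speed c1 c2) (broken_line 0 A B s0) has_integral
                s0 * (k1 * p1\<^sup>2) + (t - s0) * (k2 * p2\<^sup>2)) {0..t}"
    using broken_line_cost[of s0 t "step_speed c1 c2" 0 A k1 B k2] before after reach k_pos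
      tasep_g_characteristic assms(1-4)
    by (simp add: s0_def A_def B_def)
  have "0 \<le> t - s0" "t - s0 \<le> t" "(t - s0) * B = x"
    using reach \<open>B \<noteq> 0\<close> by (simp_all add: s0_def B_def)
  then have "broken_line 0 A B s0 t = x" "broken_line 0 A B s0 0 = - A * s0"
    by (auto simp: broken_line_def algebra_simps)
  moreover have "rho * (- A * s0) - (s0 * (k1 * p1\<^sup>2) + (t - s0) * (k2 * p2\<^sup>2))
                  = p2 * x - k2 * p2 * (1 - p2) * t"
  proof -
    have "rho * (- A * s0) - s0 * (k1 * p1\<^sup>2) = - s0 * (k1 * (rho * (1 - 2 * p1) + p1\<^sup>2))"
      by (simp add: A_def algebra_simps)
    also have "\<dots> = - s0 * (k2 * (p2 * (1 - p2)))"
      using junction by simp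
    finally have "rho * (- A * s0) - s0 * (k1 * p1\<^sup>2) = - s0 * (k2 * (p2 * (1 - p2)))" .
    then show ?thesis
      unfolding \<open>(t - s0) * B = x\<close>[symmetric] by (simp add: B_def power2_eq_square algebra_simps)
  qed
  ultimately show ?thesis
    using admissible_path_costI[OF broken_line_piecewise_C1 _ cost] by metis
qed

lemma V_has_derivative_affine:
  assumes "open S" "x \<in> S" "\<And>y. y \<in> S \<Longrightarrow> V y = k * y - b"
  shows "(V has_real_derivative k) (at x)"
  by (rule has_field_derivative_transform_within_open[of "\<lambda>y. k * y - b", OF _ assms(1,2)])
    (use assms(3) in \<open>auto intro!: derivative_eq_intros\<close>)

lemma value_right_state:
  assumes "0 < x" "(1 - 2 * rho) * t * c2 < x"
  shows "V x = rho * x - c2 * rho * (1 - rho) * t"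
proof -
  have flux: "c2 * rho * (1 - rho) \<le> c1 * rho * (1 - rho)"
    using c2_le_c1 rho_pos rho_less_1 by (intro mult_right_mono) auto
  obtain w where "admissible_path (step_speed c1 c2) t x w"
    "payoff w = rho * x - c2 * rho * (1 - rho) * t"
    using payoff_straight_characteristic[of rho x c2] assms rho_pos rho_less_1
    by (auto simp: step_speed_def power2_eq_square algebra_simps)
  then show ?thesis
  proof (rule value_fn_eqI[rotated])
    fix w' assume "admissible_path (step_speed c1 c2) t x w'"
    from payoff_le_corner[OF this _ order_refl order_refl _ flux order_refl]
    show "payoff w' \<le> rho * x - c2 * rho * (1 - rho) * t" using assms rho_pos rho_less_1 by simp
  qed
qed

lemma value_fan:
  fixes x :: real
  defines "p \<equiv> 1/2 * (1 - x / (t * c2))"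
  assumes "0 < x" "x < c2 * (1 - 2 * rho) * t" and flux: "c2 * p * (1 - p) \<le> c1 * rho * (1 - rho)"
  shows "V x = - t * c2 * p\<^sup>2"
proof -
  have x: "x = c2 * t * (1 - 2 * p)" unfolding p_def using c2_pos t_pos by (simp add: field_simps)
  have "c2 * t * (1 - 2 * p) < c2 * t * (1 - 2 * rho)" "0 < c2 * t * (1 - 2 * p)" "0 < c2 * t"
    using assms(2,3) c2_pos t_pos unfolding x by (simp_all add: mult_ac)
  then have p: "rho < p" "p < 1/2"
    by (simp_all add: mult_less_cancel_left_pos zero_less_mult_iff)
  obtain w where "admissible_path (step_speed c1 c2) t x w" "payoff w = - t * c2 * p\<^sup>2"
    using payoff_straight_characteristic[of p x c2] p rho_pos assms(2) by (auto simp: x step_speed_def mult_ac)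
  then show ?thesis
  proof (rule value_fn_eqI[rotated])
    fix w' assume "admissible_path (step_speed c1 c2) t x w'"
    from payoff_le_corner[OF this _ order_refl _ _ flux order_refl]
    show "payoff w' \<le> - t * c2 * p\<^sup>2"
      using p rho_pos assms(2) by (simp add: x power2_eq_square algebra_simps)
  qed
qed

lemma shock_payoff_difference:
  "((1 - s) * x - c1 * s * (1 - s) * t) - (rho * x - c1 * rho * (1 - rho) * t)
     = (1 - rho - s) * (x + t * c1 * (rho - s))"
  by (simp add: algebra_simps)

lemma value_ahead_of_shock:
  assumes s: "0 \<le> s" "s \<le> rho" "rho \<le> 1 - s"
    and p: "rho \<le> p" "p \<le> 1" "c1 * s * (1 - s) \<le> c2 * p * (1 - p)"
    and x: "x < - t * c1 * (rho - s)"
  shows "V x = rho * x - c1 * rho * (1 - rho) * t"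
proof -
  have "0 \<le> t * c1 * (rho - s)" "0 \<le> t * c1 * (1 - rho - s)"
    using t_pos c1_pos s by simp_all
  then have "x < 0" "x - c1 * (1 - 2 * rho) * t < 0"
    using x by (auto simp: algebra_simps)
  then obtain w where "admissible_path (step_speed c1 c2) t x w"
    "payoff w = rho * x - c1 * rho * (1 - rho) * t"
    using payoff_straight_characteristic[of rho x c1] rho_pos rho_less_1
    by (auto simp: step_speed_def power2_eq_square algebra_simps)
  then show ?thesis
  proof (rule value_fn_eqI[rotated])
    fix w' assume "admissible_path (step_speed c1 c2) t x w'"
    moreover have "(1 - rho - s) * (x + t * c1 * (rho - s)) \<le> 0"
      using s x by (intro mult_nonneg_nonpos) auto
    ultimately show "payoff w' \<le> rho * x - c1 * rho * (1 - rho) * t"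
      using payoff_le_shock[OF _ \<open>x < 0\<close> s p] shock_payoff_difference[of s x] by force
  qed
qed

text \<open>Behind the shock the characteristics come from the origin, where the density on the
  right is \<open>max rho (1/2)\<close>: the state \<open>rho\<close> itself, or the edge of the rarefaction fan.\<close>
lemma value_behind_shock:
  assumes s: "0 \<le> s" "s < 1/2" "s \<le> rho" "rho \<le> 1 - s"
    and junction: "c1 * s * (1 - s) = c2 * max rho (1/2) * (1 - max rho (1/2))"
    and x: "- t * c1 * (rho - s) < x" "x < 0"
  shows "V x = (1 - s) * x - c1 * s * (1 - s) * t"
proof -
  let ?m = "max rho (1/2)"
  have "c2 * (rho * (1 - 2 * ?m) + ?m\<^sup>2) = c2 * ?m * (1 - ?m)"
    by (auto simp: max_def power2_eq_square algebra_simps)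
  also have "\<dots> = c1 * ((1 - s) * (1 - (1 - s)))"
    using junction by (simp add: algebra_simps)
  finally have junction': "c2 * (rho * (1 - 2 * ?m) + ?m\<^sup>2) = c1 * ((1 - s) * (1 - (1 - s)))" .
  have "0 \<le> x / (c1 * (1 - 2 * (1 - s)))" "x / (c1 * (1 - 2 * (1 - s))) \<le> t"
  proof -
    have "t * c1 * (rho - s) \<le> t * c1 * (1 - 2 * s)"
      using s t_pos c1_pos by (intro mult_left_mono) auto
    then have "- x \<le> t * c1 * (1 - 2 * s)" using x by linarith
    then show "0 \<le> x / (c1 * (1 - 2 * (1 - s)))" "x / (c1 * (1 - 2 * (1 - s))) \<le> t"
      using x s c1_pos by (simp_all add: divide_nonpos_neg field_simps)
  qed
  moreover have "c2 = (if ?m < 1/2 then c1 else c2)" "c1 = (if 1 - s < 1/2 then c2 else c1)"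
    using s by auto
  moreover have "0 \<le> ?m" "?m \<le> 1" "0 \<le> 1 - s" "1 - s \<le> 1" "1 - s \<noteq> 1/2"
    using s rho_less_1 by auto
  ultimately obtain w where "admissible_path (step_speed c1 c2) t x w"
    "payoff w = (1 - s) * x - c1 * (1 - s) * (1 - (1 - s)) * t"
    using payoff_two_characteristics[of ?m "1 - s" c2 c1 x, OF _ _ _ _ _ _ _ junction'] by blast
  moreover have "c1 * (1 - s) * (1 - (1 - s)) = c1 * s * (1 - s)" by (simp add: algebra_simps)
  ultimately have "admissible_path (step_speed c1 c2) t x w"
    "payoff w = (1 - s) * x - c1 * s * (1 - s) * t" by simp_all
  then show ?thesis
  proof (rule value_fn_eqI[rotated])
    fix w' assume "admissible_path (step_speed c1 c2) t x w'"
    moreover have "rho \<le> ?m" "c1 * s * (1 - s) \<le> c2 * ?m * (1 - ?m)"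
      using junction by auto
    ultimately have "payoff w' \<le> max (rho * x - c1 * rho * (1 - rho) * t) ((1 - s) * x - c1 * s * (1 - s) * t)"
      using payoff_le_shock[OF _ \<open>x < 0\<close> s(1,3,4)] \<open>?m \<le> 1\<close> by blast
    moreover have "0 \<le> (1 - rho - s) * (x + t * c1 * (rho - s))"
      using s x by (intro mult_nonneg_nonneg) auto
    ultimately show "payoff w' \<le> (1 - s) * x - c1 * s * (1 - s) * t"
      using shock_payoff_difference[of s x] by linarith
  qed
qed

lemma value_transmitted_state:
  assumes r: "rho \<le> r" "r < 1/2" "c2 * r * (1 - r) = c1 * rho * (1 - rho)"
    and x: "0 < x" "x < c2 * (1 - 2 * r) * t"
  shows "V x = r * x - c1 * rho * (1 - rho) * t"
proof -
  have "0 \<le> x / (c2 * (1 - 2 * r))" "x / (c2 * (1 - 2 * r)) \<le> t"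
    using x r c2_pos by (simp_all add: field_simps)
  moreover have "c1 * (rho * (1 - 2 * rho) + rho\<^sup>2) = c2 * (r * (1 - r))"
    using r(3) by (simp add: power2_eq_square algebra_simps)
  ultimately obtain w where "admissible_path (step_speed c1 c2) t x w"
    "payoff w = r * x - c1 * rho * (1 - rho) * t"
    using payoff_two_characteristics[of rho r c1 c2 x] r rho_pos by auto
  then show ?thesis
  proof (rule value_fn_eqI[rotated])
    fix w' assume "admissible_path (step_speed c1 c2) t x w'"
    from payoff_le_corner[OF this _ order_refl r(1) _ order_refl] r x rho_pos
    show "payoff w' \<le> r * x - c1 * rho * (1 - rho) * t" by simp
  qed
qed

lemma V_has_derivative_right_state:
  assumes "0 < x" "(1 - 2 * rho) * t * c2 < x"
  shows "(V has_real_derivative rho) (at x)"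
  by (rule V_has_derivative_affine[of "{max 0 ((1 - 2 * rho) * t * c2)<..}"])
    (use assms value_right_state in auto)

lemma V_has_derivative_fan:
  assumes q: "q \<le> 1/2" "c2 * q * (1 - q) \<le> c1 * rho * (1 - rho)"
    and x: "c2 * (1 - 2 * q) * t < x" "x < c2 * (1 - 2 * rho) * t"
  shows "(V has_real_derivative 1/2 * (1 - x / (t * c2))) (at x)"
proof (rule has_field_derivative_transform_within_open[OF fan_profile_has_derivative[OF t_pos c2_pos]])
  show "open {c2 * (1 - 2 * q) * t<..<c2 * (1 - 2 * rho) * t}" "x \<in> {c2 * (1 - 2 * q) * t<..<c2 * (1 - 2 * rho) * t}"
    using x by auto
  fix y assume y: "y \<in> {c2 * (1 - 2 * q) * t<..<c2 * (1 - 2 * rho) * t}"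
  let ?p = "1/2 * (1 - y / (t * c2))"
  have "0 \<le> c2 * (1 - 2 * q) * t" using q c2_pos t_pos by simp
  then have "0 < y" using y by simp
  have "?p < q"
    using y c2_pos t_pos by (simp add: field_simps)
  then have "?p * (1 - ?p) \<le> q * (1 - q)"
    using q by (intro flux_mono) linarith+
  then have "c2 * (?p * (1 - ?p)) \<le> c2 * (q * (1 - q))"
    using c2_pos by (intro mult_left_mono) auto
  then have "c2 * ?p * (1 - ?p) \<le> c1 * rho * (1 - rho)" using q(2) unfolding mult.assoc by linarith
  then show "- t * c2 * ?p\<^sup>2 = V y"
    using value_fan[OF \<open>0 < y\<close>] y by simp
qed

lemma V_has_derivative_ahead_of_shock:
  assumes "0 \<le> s" "s \<le> rho" "rho \<le> 1 - s"
    and "rho \<le> p" "p \<le> 1" "c1 * s * (1 - s) \<le> c2 * p * (1 - p)"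
    and "x < - t * c1 * (rho - s)"
  shows "(V has_real_derivative rho) (at x)"
  by (rule V_has_derivative_affine[of "{..< - t * c1 * (rho - s)}"])
    (use assms value_ahead_of_shock in auto)

lemma V_has_derivative_behind_shock:
  assumes "0 \<le> s" "s < 1/2" "s \<le> rho" "rho \<le> 1 - s"
    and "c1 * s * (1 - s) = c2 * max rho (1/2) * (1 - max rho (1/2))"
    and "- t * c1 * (rho - s) < x" "x < 0"
  shows "(V has_real_derivative 1 - s) (at x)"
  by (rule V_has_derivative_affine[of "{- t * c1 * (rho - s)<..<0}"])
    (use assms value_behind_shock in auto)

lemma V_has_derivative_transmitted_state:
  assumes "rho \<le> r" "r < 1/2" "c2 * r * (1 - r) = c1 * rho * (1 - rho)"
    and "0 < x" "x < c2 * (1 - 2 * r) * t"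
  shows "(V has_real_derivative r) (at x)"
  by (rule V_has_derivative_affine[of "{0<..<c2 * (1 - 2 * r) * t}"])
    (use assms value_transmitted_state in auto)

lemma low_density_root:
  defines "rs \<equiv> 1/2 - 1/2 * sqrt (1 - c2 / c1)"
    and "r \<equiv> 1/2 - 1/2 * sqrt (1 - 4 * rho * (1 - rho) * c1 / c2)"
  assumes rho: "rho < rs"
  shows "rho \<le> r" "r < 1/2" "c2 * r * (1 - r) = c1 * rho * (1 - rho)"
proof -
  have "0 \<le> 1 - c2 / c1" "1 - c2 / c1 \<le> 1" using c1_pos c2_pos c2_le_c1 by auto
  note rs = flux_lower_root[OF this, folded rs_def]
  have "rho < 1/2" using rho rs(2) by linarith
  have "rho * (1 - rho) < rs * (1 - rs)"
    using flux_le_imp_le[of rs rho] rs(2) \<open>rho < 1/2\<close> rho by force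
  then have "4 * rho * (1 - rho) * c1 / c2 < 1"
    using rs(3) c1_pos c2_pos by (simp add: field_simps)
  moreover have "0 \<le> 4 * rho * (1 - rho) * c1 / c2"
    using rho_pos rho_less_1 c1_pos c2_pos by simp
  ultimately have "0 \<le> 1 - 4 * rho * (1 - rho) * c1 / c2" "1 - 4 * rho * (1 - rho) * c1 / c2 \<le> 1"
    and D_pos: "0 < 1 - 4 * rho * (1 - rho) * c1 / c2" by simp_all
  note r = flux_lower_root[OF this(1,2), folded r_def]
  show "r < 1/2" using r(4)[OF D_pos] .
  show r_flux: "c2 * r * (1 - r) = c1 * rho * (1 - rho)"
    using r(3) c2_pos by (simp add: field_simps)
  have "c2 * (rho * (1 - rho)) \<le> c2 * (r * (1 - r))"
    using r_flux c2_le_c1 rho_pos rho_less_1 mult_right_mono[of c2 c1 "rho * (1 - rho)"]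
    by (simp add: mult.assoc)
  then show "rho \<le> r"
    using flux_le_imp_le[of rho r] \<open>rho < 1/2\<close> \<open>r < 1/2\<close> c2_pos by simp
qed

lemma low_density_profile:
  defines "rs \<equiv> 1/2 - 1/2 * sqrt (1 - c2 / c1)"
    and "r \<equiv> 1/2 - 1/2 * sqrt (1 - 4 * rho * (1 - rho) * c1 / c2)"
  assumes rho: "rho < rs"
  shows "(\<forall>x<0. (V has_real_derivative rho) (at x)) \<and>
    (\<forall>x. 0 < x \<and> x < c2 * (1 - 2 * r) * t \<longrightarrow> (V has_real_derivative r) (at x)) \<and>
    (\<forall>x. c2 * (1 - 2 * r) * t < x \<and> x < c2 * (1 - 2 * rho) * t \<longrightarrow>
          (V has_real_derivative (1/2 * (1 - x / (t * c2)))) (at x)) \<and>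
    (\<forall>x. x > (1 - 2 * rho) * t * c2 \<longrightarrow> (V has_real_derivative rho) (at x))"
proof -
  note r = low_density_root[OF rho[unfolded rs_def], folded r_def]
  have "rho < 1/2" using r(1,2) by linarith
  show ?thesis
  proof (intro conjI allI impI)
    show "(V has_real_derivative rho) (at x)" if "x < 0" for x
      by (rule V_has_derivative_ahead_of_shock[of rho r]) (use that rho_pos r in auto)
    show "(V has_real_derivative r) (at x)" if "0 < x \<and> x < c2 * (1 - 2 * r) * t" for x
      using V_has_derivative_transmitted_state[OF r] that by blast
    show "(V has_real_derivative 1/2 * (1 - x / (t * c2))) (at x)"
      if "c2 * (1 - 2 * r) * t < x \<and> x < c2 * (1 - 2 * rho) * t" for x
      using V_has_derivative_fan[of r x] that r(2,3) by simp
    show "(V has_real_derivative rho) (at x)" if "(1 - 2 * rho) * t * c2 < x" for x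
    proof (rule V_has_derivative_right_state[OF _ that])
      have "0 \<le> (1 - 2 * rho) * t * c2" using \<open>rho < 1/2\<close> t_pos c2_pos by simp
      then show "0 < x" using that by linarith
    qed
  qed
qed

lemma critical_density_root:
  defines "rs \<equiv> 1/2 - 1/2 * sqrt (1 - c2 / c1)"
  shows "0 \<le> rs" "rs \<le> 1/2" "c1 * rs * (1 - rs) = c2 * (1/2) * (1 - 1/2)"
proof -
  have "0 \<le> 1 - c2 / c1" "1 - c2 / c1 \<le> 1" using c1_pos c2_pos c2_le_c1 by auto
  note rs = flux_lower_root[OF this, folded rs_def]
  show "0 \<le> rs" "rs \<le> 1/2" using rs(1,2) .
  show "c1 * rs * (1 - rs) = c2 * (1/2) * (1 - 1/2)"
    using rs(3) c1_pos by (simp add: field_simps)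
qed

lemma intermediate_density_profile:
  defines "rs \<equiv> 1/2 - 1/2 * sqrt (1 - c2 / c1)"
  assumes rho: "rs \<le> rho" "rho \<le> 1/2"
  shows "(\<forall>x. x < - t * c1 * (rho - rs) \<longrightarrow> (V has_real_derivative rho) (at x)) \<and>
    (\<forall>x. - t * c1 * (rho - rs) < x \<and> x < 0 \<longrightarrow> (V has_real_derivative (1 - rs)) (at x)) \<and>
    (\<forall>x. 0 < x \<and> x < (1 - 2 * rho) * t * c2 \<longrightarrow>
          (V has_real_derivative (1/2 * (1 - x / (t * c2)))) (at x)) \<and>
    (\<forall>x. x > (1 - 2 * rho) * t * c2 \<longrightarrow> (V has_real_derivative rho) (at x))"
proof -
  note rs = critical_density_root[folded rs_def]
  have "c1 * (rs * (1 - rs)) \<le> c1 * (rho * (1 - rho))"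
    using flux_mono[of rs rho] rho c1_pos by (intro mult_left_mono) auto
  moreover have "c2 * (1/2) * (1 - 1/2) = c1 * (rs * (1 - rs))"
    using rs(3) by (simp add: mult.assoc)
  ultimately have half_flux: "c2 * (1/2) * (1 - 1/2) \<le> c1 * rho * (1 - rho)"
    unfolding mult.assoc by linarith
  have "max rho (1/2) = 1/2" using rho by simp
  show ?thesis
  proof (intro conjI allI impI)
    show "(V has_real_derivative rho) (at x)" if "x < - t * c1 * (rho - rs)" for x
      by (rule V_has_derivative_ahead_of_shock[of rs "1/2"]) (use that rho rs in auto)
    show "(V has_real_derivative 1 - rs) (at x)" if x: "- t * c1 * (rho - rs) < x \<and> x < 0" for x
    proof (rule V_has_derivative_behind_shock)
      have "0 < t * c1 * (rho - rs)" using x by linarith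
      then show "rs < 1/2"
        using rho mult_pos_pos[OF t_pos c1_pos] by (simp add: zero_less_mult_iff)
    qed (use x rho rs \<open>max rho (1/2) = 1/2\<close> in auto)
    show "(V has_real_derivative 1/2 * (1 - x / (t * c2))) (at x)"
      if "0 < x \<and> x < (1 - 2 * rho) * t * c2" for x
      using V_has_derivative_fan[OF _ half_flux] that by (simp add: mult_ac)
    show "(V has_real_derivative rho) (at x)" if "(1 - 2 * rho) * t * c2 < x" for x
    proof (rule V_has_derivative_right_state[OF _ that])
      have "0 \<le> (1 - 2 * rho) * t * c2" using rho t_pos c2_pos by simp
      then show "0 < x" using that by linarith
    qed
  qed
qed

lemma high_density_root:
  defines "r \<equiv> 1/2 - 1/2 * sqrt (1 - 4 * rho * (1 - rho) * c2 / c1)"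
  assumes rho: "1/2 \<le> rho"
  shows "0 \<le> r" "r \<le> 1 - rho" "c1 * r * (1 - r) = c2 * rho * (1 - rho)"
proof -
  have "4 * (rho * (1 - rho)) * (c2 / c1) \<le> 1 * 1"
    using flux_le_quarter[of rho] rho_pos rho_less_1 c1_pos c2_pos c2_le_c1
    by (intro mult_mono) auto
  moreover have "0 \<le> 4 * rho * (1 - rho) * c2 / c1"
    using rho_pos rho_less_1 c1_pos c2_pos by simp
  ultimately have "0 \<le> 1 - 4 * rho * (1 - rho) * c2 / c1" "1 - 4 * rho * (1 - rho) * c2 / c1 \<le> 1"
    by simp_all
  note r = flux_lower_root[OF this, folded r_def]
  show "0 \<le> r" using r(1) .
  show r_flux: "c1 * r * (1 - r) = c2 * rho * (1 - rho)"
    using r(3) c1_pos by (simp add: field_simps)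
  have "c1 * (r * (1 - r)) \<le> c1 * ((1 - rho) * (1 - (1 - rho)))"
    using r_flux c2_le_c1 rho_pos rho_less_1 mult_right_mono[of c2 c1 "rho * (1 - rho)"]
    by (simp add: algebra_simps)
  then show "r \<le> 1 - rho"
    using flux_le_imp_le[of r "1 - rho"] r(2) rho c1_pos by simp
qed

lemma high_density_profile:
  defines "r \<equiv> 1/2 - 1/2 * sqrt (1 - 4 * rho * (1 - rho) * c2 / c1)"
  assumes rho: "1/2 \<le> rho"
  shows "(\<forall>x. x < - t * c1 * (rho - r) \<longrightarrow> (V has_real_derivative rho) (at x)) \<and>
    (\<forall>x. - t * c1 * (rho - r) < x \<and> x < 0 \<longrightarrow> (V has_real_derivative (1 - r)) (at x)) \<and>
    (\<forall>x>0. (V has_real_derivative rho) (at x))"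
proof -
  note r = high_density_root[OF rho, folded r_def]
  have "max rho (1/2) = rho" using rho by simp
  show ?thesis
  proof (intro conjI allI impI)
    show "(V has_real_derivative rho) (at x)" if "x < - t * c1 * (rho - r)" for x
      by (rule V_has_derivative_ahead_of_shock[of r rho])
        (use that rho r rho_less_1 in auto)
    show "(V has_real_derivative 1 - r) (at x)" if x: "- t * c1 * (rho - r) < x \<and> x < 0" for x
    proof (rule V_has_derivative_behind_shock)
      have "0 < t * c1 * (rho - r)" using x by linarith
      then show "r < 1/2"
        using r(2) mult_pos_pos[OF t_pos c1_pos] by (simp add: zero_less_mult_iff)
      show "c1 * r * (1 - r) = c2 * max rho (1/2) * (1 - max rho (1/2))"
        using r(3) \<open>max rho (1/2) = rho\<close> by simp
    qed (use x rho r(1,2) in auto)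
    show "(V has_real_derivative rho) (at x)" if "0 < x" for x
    proof (rule V_has_derivative_right_state[OF that])
      have "(1 - 2 * rho) * (t * c2) \<le> 0"
        using rho t_pos c2_pos by (intro mult_nonpos_nonneg) auto
      then show "(1 - 2 * rho) * t * c2 < x" using that by (simp add: mult.assoc)
    qed
  qed
qed

end

theorem corollary4p3:
  fixes c1 c2 rho t :: real
  assumes "c2 > 0" and "c1 \<ge> c2" and "0 < rho" and "rho < 1" and "t > 0"
  defines "V \<equiv> (\<lambda>x. value_fn (step_speed c1 c2) (\<lambda>y. rho * y) x t)"
      and "rs \<equiv> 1/2 - 1/2 * sqrt (1 - c2 / c1)"
  shows
   "(rho < rs \<longrightarrow>
      (let r = 1/2 - 1/2 * sqrt (1 - 4 * rho * (1 - rho) * c1 / c2) in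
        (\<forall>x<0. (V has_real_derivative rho) (at x)) \<and>
        (\<forall>x. 0 < x \<and> x < c2 * (1 - 2 * r) * t \<longrightarrow> (V has_real_derivative r) (at x)) \<and>
        (\<forall>x. c2 * (1 - 2 * r) * t < x \<and> x < c2 * (1 - 2 * rho) * t \<longrightarrow>
              (V has_real_derivative (1/2 * (1 - x / (t * c2)))) (at x)) \<and>
        (\<forall>x. x > (1 - 2 * rho) * t * c2 \<longrightarrow> (V has_real_derivative rho) (at x))))
    \<and>
    (rs \<le> rho \<and> rho \<le> 1/2 \<longrightarrow>
        (\<forall>x. x < - t * c1 * (rho - rs) \<longrightarrow> (V has_real_derivative rho) (at x)) \<and>
        (\<forall>x. - t * c1 * (rho - rs) < x \<and> x < 0 \<longrightarrow> (V has_real_derivative (1 - rs)) (at x)) \<and>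
        (\<forall>x. 0 < x \<and> x < (1 - 2 * rho) * t * c2 \<longrightarrow>
              (V has_real_derivative (1/2 * (1 - x / (t * c2)))) (at x)) \<and>
        (\<forall>x. x > (1 - 2 * rho) * t * c2 \<longrightarrow> (V has_real_derivative rho) (at x)))
    \<and>
    (rho \<ge> 1/2 \<longrightarrow>
      (let r = 1/2 - 1/2 * sqrt (1 - 4 * rho * (1 - rho) * c2 / c1) in
        (\<forall>x. x < - t * c1 * (rho - r) \<longrightarrow> (V has_real_derivative rho) (at x)) \<and>
        (\<forall>x. - t * c1 * (rho - r) < x \<and> x < 0 \<longrightarrow> (V has_real_derivative (1 - r)) (at x)) \<and>
        (\<forall>x>0. (V has_real_derivative rho) (at x))))"
proof -
  interpret step_tasep c1 c2 rho t
    using assms(1-5) by unfold_locales auto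
  show ?thesis
    using low_density_profile intermediate_density_profile high_density_profile
    unfolding V_def rs_def Let_def by blast
qed

end
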